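(* Suppose the e-values are valid, i.e. $\mathbb{E}[e_t\mid\mathcal{F}_{t-1}]\le1$ a.s. whenever $\theta_t=0$. If the $\mathcal{F}_{t-1}$-measurable testing levels satisfy, almost surely for every $t\ge1$, $$\widehat{\mathrm{FDP}}^{\mathrm{LORD}}_{\mathrm{e}}(t):=\sum_{j=1}^t\frac{\alpha_j}{R_{j-1}+1}\le\alpha,$$ then $\mathrm{FDR}(t)\le\alpha$ for all $t\ge1$.
   Context: Let $\alpha\in(0,1)$ be a target level. Hypotheses are indexed by $t=1,2,\dots$; $\theta_t\in\{0,1\}$ is a fixed (non-random) indicator with $\theta_t=0$ iff the $t$-th null hypothesis is true. $e_1,e_2,\dots$ are nonnegative random variables (e-values). Testing levels $\alpha_1,\alpha_2,\dots$ are nonnegative random variables and the decisions are $\delta_t=\mathbb{1}\{e_t\ge 1/\alpha_t\}$ (with $\delta_t=0$ when $\alpha_t=0$). Let $\mathcal{F}_t=\sigma(\delta_1,\dots,\delta_t)$, $\mathcal{F}_0$ trivial; each $\alpha_t$ is required to be $\mathcal{F}_{t-1}$-measurable. $R_t=\sum_{j=1}^t\delta_j$, $R_0=0$. $\mathcal{H}_0(t)=\{j\le t:\theta_j=0\}$. $\mathrm{FDR}(t)=\mathbb{E}\big[\sum_{j\in\mathcal{H}_0(t)}\delta_j/(R_t\vee 1)\big]$. *)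

theory Defs
  imports "HOL-Probability.Probability"
begin

definition delta :: "(nat \<Rightarrow> 'a \<Rightarrow> real) \<Rightarrow> (nat \<Rightarrow> 'a \<Rightarrow> real) \<Rightarrow> nat \<Rightarrow> 'a \<Rightarrow> real" where
  "delta alpha e t \<omega> = (if alpha t \<omega> \<noteq> 0 \<and> e t \<omega> \<ge> 1 / alpha t \<omega> then 1 else 0)"

definition Rej :: "(nat \<Rightarrow> 'a \<Rightarrow> real) \<Rightarrow> (nat \<Rightarrow> 'a \<Rightarrow> real) \<Rightarrow> nat \<Rightarrow> 'a \<Rightarrow> real" where
  "Rej alpha e t \<omega> = (\<Sum>j=1..t. delta alpha e j \<omega>)"

definition filt :: "'a measure \<Rightarrow> (nat \<Rightarrow> 'a \<Rightarrow> real) \<Rightarrow> (nat \<Rightarrow> 'a \<Rightarrow> real) \<Rightarrow> nat \<Rightarrow> 'a measure" where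
  "filt M alpha e t = sigma (space M)
     {delta alpha e j -` B \<inter> space M | j B. 1 \<le> j \<and> j \<le> t \<and> B \<in> sets borel}"

definition FDR :: "'a measure \<Rightarrow> (nat \<Rightarrow> nat) \<Rightarrow> (nat \<Rightarrow> 'a \<Rightarrow> real) \<Rightarrow> (nat \<Rightarrow> 'a \<Rightarrow> real) \<Rightarrow> nat \<Rightarrow> real" where
  "FDR M theta alpha e t = (\<integral>\<omega>. (\<Sum>j\<in>{j\<in>{1..t}. theta j = 0}. delta alpha e j \<omega>)
       / max (Rej alpha e t \<omega>) 1 \<partial>M)"

end

theory Submission
  imports Defs
begin

(* A hypothesis j is rejected only if alpha_j e_j >= 1, and a rejection at j forces
   R_t >= R_(j-1) + 1.  Hence the false discovery proportion at time t is bounded pointwise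
   by the sum over true nulls j <= t of w_j e_j, where w_j = alpha_j / (R_(j-1) + 1).
   The weight w_j is F_(j-1)-measurable, so conditioning on F_(j-1) and validity of e_j give
   E[w_j e_j] <= E[w_j]; summing over j, FDR(t) <= E[sum_(j<=t) w_j] <= alpha. *)

definition lord_weight :: "(nat \<Rightarrow> 'a \<Rightarrow> real) \<Rightarrow> (nat \<Rightarrow> 'a \<Rightarrow> real) \<Rightarrow> nat \<Rightarrow> 'a \<Rightarrow> real" where
  "lord_weight alpha e j \<omega> = alpha j \<omega> / (Rej alpha e (j - 1) \<omega> + 1)"

definition fdp :: "(nat \<Rightarrow> nat) \<Rightarrow> (nat \<Rightarrow> 'a \<Rightarrow> real) \<Rightarrow> (nat \<Rightarrow> 'a \<Rightarrow> real) \<Rightarrow> nat \<Rightarrow> 'a \<Rightarrow> real" where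
  "fdp theta alpha e t \<omega> =
     (\<Sum>j\<in>{j\<in>{1..t}. theta j = 0}. delta alpha e j \<omega>) / max (Rej alpha e t \<omega>) 1"

lemma FDR_eq_integral_fdp: "FDR M theta alpha e t = (\<integral>\<omega>. fdp theta alpha e t \<omega> \<partial>M)"
  unfolding FDR_def fdp_def ..

lemma delta_nonneg: "0 \<le> delta alpha e j \<omega>"
  unfolding delta_def by simp

lemma delta_eq_0_or_1: "delta alpha e j \<omega> = 0 \<or> delta alpha e j \<omega> = 1"
  unfolding delta_def by simp

lemma delta_le_level_mult_evalue:
  assumes "0 \<le> alpha j \<omega>" "0 \<le> e j \<omega>"
  shows "delta alpha e j \<omega> \<le> alpha j \<omega> * e j \<omega>"
proof (cases "alpha j \<omega> \<noteq> 0 \<and> e j \<omega> \<ge> 1 / alpha j \<omega>")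
  case True
  then have "0 < alpha j \<omega>" using assms(1) by simp
  with True show ?thesis unfolding delta_def by (simp add: field_simps)
qed (use assms in \<open>auto simp: delta_def\<close>)

lemma Rej_nonneg: "0 \<le> Rej alpha e t \<omega>"
  unfolding Rej_def by (intro sum_nonneg delta_nonneg)

lemma Rej_Suc: "Rej alpha e (Suc j) \<omega> = Rej alpha e j \<omega> + delta alpha e (Suc j) \<omega>"
  unfolding Rej_def by simp

lemma Rej_mono: "i \<le> j \<Longrightarrow> Rej alpha e i \<omega> \<le> Rej alpha e j \<omega>"
  unfolding Rej_def by (intro sum_mono2 delta_nonneg) auto

lemma delta_div_Rej_le:
  assumes "1 \<le> j" "j \<le> t"
  shows "delta alpha e j \<omega> / max (Rej alpha e t \<omega>) 1 \<le> delta alpha e j \<omega> / (Rej alpha e (j - 1) \<omega> + 1)"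
proof (cases "delta alpha e j \<omega> = 1")
  case True
  have "Rej alpha e (j - 1) \<omega> + 1 = Rej alpha e j \<omega>"
    using assms(1) True Rej_Suc[of alpha e "j - 1" \<omega>] by simp
  also have "\<dots> \<le> max (Rej alpha e t \<omega>) 1"
    by (intro max.coboundedI1 Rej_mono assms(2))
  finally show ?thesis
    using True Rej_nonneg[of alpha e "j - 1" \<omega>] by (simp add: frac_le)
next
  case False
  then show ?thesis using delta_eq_0_or_1 by (metis div_0 order_refl)
qed

lemma fdp_nonneg: "0 \<le> fdp theta alpha e t \<omega>"
  unfolding fdp_def by (intro divide_nonneg_pos sum_nonneg delta_nonneg) auto

lemma fdp_le_sum_lord_weight_mult_evalue:
  assumes "\<And>j. 0 \<le> alpha j \<omega>" "\<And>j. 0 \<le> e j \<omega>"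
  shows "fdp theta alpha e t \<omega> \<le> (\<Sum>j\<in>{j\<in>{1..t}. theta j = 0}. lord_weight alpha e j \<omega> * e j \<omega>)"
  unfolding fdp_def sum_divide_distrib
proof (rule sum_mono)
  fix j assume "j \<in> {j\<in>{1..t}. theta j = 0}"
  then have "delta alpha e j \<omega> / max (Rej alpha e t \<omega>) 1
      \<le> delta alpha e j \<omega> / (Rej alpha e (j - 1) \<omega> + 1)"
    by (intro delta_div_Rej_le) auto
  also have "\<dots> \<le> alpha j \<omega> * e j \<omega> / (Rej alpha e (j - 1) \<omega> + 1)"
    using assms Rej_nonneg[of alpha e "j - 1" \<omega>]
    by (intro divide_right_mono delta_le_level_mult_evalue) auto
  finally show "delta alpha e j \<omega> / max (Rej alpha e t \<omega>) 1 \<le> lord_weight alpha e j \<omega> * e j \<omega>"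
    unfolding lord_weight_def by simp
qed

lemma space_filt: "space (filt M alpha e t) = space M"
  unfolding filt_def by (rule space_measure_of_conv)

lemma delta_measurable_filt:
  assumes "1 \<le> i" "i \<le> t"
  shows "delta alpha e i \<in> borel_measurable (filt M alpha e t)"
proof (rule measurableI)
  fix A :: "real set" assume "A \<in> sets borel"
  with assms have "delta alpha e i -` A \<inter> space M
      \<in> {delta alpha e j -` B \<inter> space M | j B. 1 \<le> j \<and> j \<le> t \<and> B \<in> sets borel}"
    by blast
  then show "delta alpha e i -` A \<inter> space (filt M alpha e t) \<in> sets (filt M alpha e t)"
    unfolding space_filt unfolding filt_def by (rule in_measure_of[rotated]) auto
qed simp

lemma Rej_measurable_filt: "Rej alpha e t \<in> borel_measurable (filt M alpha e t)"
  unfolding Rej_def[abs_def] by (intro borel_measurable_sum delta_measurable_filt) auto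

lemma lord_weight_measurable_filt:
  assumes "alpha j \<in> borel_measurable (filt M alpha e (j - 1))"
  shows "lord_weight alpha e j \<in> borel_measurable (filt M alpha e (j - 1))"
  using assms Rej_measurable_filt unfolding lord_weight_def[abs_def] by measurable

lemma (in sigma_finite_subalgebra) nn_integral_mult_le_if_nn_cond_exp_le_1:
  assumes "f \<in> borel_measurable F" "g \<in> borel_measurable M"
    and "AE x in M. nn_cond_exp M F g x \<le> 1"
  shows "(\<integral>\<^sup>+x. f x * g x \<partial>M) \<le> (\<integral>\<^sup>+x. f x \<partial>M)"
proof -
  have "(\<integral>\<^sup>+x. f x * g x \<partial>M) = (\<integral>\<^sup>+x. f x * nn_cond_exp M F g x \<partial>M)"
    using assms(1,2) by (rule nn_cond_exp_intg[symmetric])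
  also have "\<dots> \<le> (\<integral>\<^sup>+x. f x \<partial>M)"
    using assms(3) by (intro nn_integral_mono_AE) (auto elim!: eventually_mono intro: mult_left_le)
  finally show ?thesis .
qed

locale online_e_testing = prob_space M for M :: "'a measure" +
  fixes e alpha :: "nat \<Rightarrow> 'a \<Rightarrow> real"
  assumes e_measurable [measurable]: "\<And>t. e t \<in> borel_measurable M"
    and alpha_measurable [measurable]: "\<And>t. alpha t \<in> borel_measurable M"
    and e_nonneg: "\<And>t \<omega>. \<omega> \<in> space M \<Longrightarrow> 0 \<le> e t \<omega>"
    and alpha_nonneg: "\<And>t \<omega>. \<omega> \<in> space M \<Longrightarrow> 0 \<le> alpha t \<omega>"
begin

lemma delta_measurable [measurable]: "delta alpha e j \<in> borel_measurable M"
  unfolding delta_def[abs_def] by measurable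

lemma Rej_measurable [measurable]: "Rej alpha e t \<in> borel_measurable M"
  unfolding Rej_def[abs_def] by measurable

lemma lord_weight_measurable [measurable]: "lord_weight alpha e j \<in> borel_measurable M"
  unfolding lord_weight_def[abs_def] by measurable

lemma fdp_measurable [measurable]: "fdp theta alpha e t \<in> borel_measurable M"
  unfolding fdp_def[abs_def] by measurable

lemma lord_weight_nonneg: "\<omega> \<in> space M \<Longrightarrow> 0 \<le> lord_weight alpha e j \<omega>"
  unfolding lord_weight_def using alpha_nonneg[of \<omega> j] Rej_nonneg[of alpha e "j - 1" \<omega>] by simp

lemma subalgebra_filt: "subalgebra M (filt M alpha e t)"
  unfolding subalgebra_def
proof
  show "space (filt M alpha e t) = space M" by (rule space_filt)
  have generators: "{delta alpha e j -` B \<inter> space M | j B. 1 \<le> j \<and> j \<le> t \<and> B \<in> sets borel} \<subseteq> sets M"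
    by (auto simp: measurable_sets)
  show "sets (filt M alpha e t) \<subseteq> sets M"
    unfolding filt_def using sets.sigma_sets_subset[OF generators] by (subst sets_measure_of) auto
qed

lemma nn_integral_lord_weight_mult_evalue_le:
  assumes "1 \<le> j" and "alpha j \<in> borel_measurable (filt M alpha e (j - 1))"
    and "AE \<omega> in M. nn_cond_exp M (filt M alpha e (j - 1)) (\<lambda>\<omega>. ennreal (e j \<omega>)) \<omega> \<le> 1"
  shows "(\<integral>\<^sup>+\<omega>. lord_weight alpha e j \<omega> * e j \<omega> \<partial>M) \<le> (\<integral>\<^sup>+\<omega>. lord_weight alpha e j \<omega> \<partial>M)"
proof -
  interpret finite_measure_subalgebra M "filt M alpha e (j - 1)"
    by unfold_locales (rule subalgebra_filt)
  have "(\<integral>\<^sup>+\<omega>. lord_weight alpha e j \<omega> * e j \<omega> \<partial>M)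
      = (\<integral>\<^sup>+\<omega>. ennreal (lord_weight alpha e j \<omega>) * ennreal (e j \<omega>) \<partial>M)"
    using lord_weight_nonneg e_nonneg by (intro nn_integral_cong) (simp add: ennreal_mult)
  also have "\<dots> \<le> (\<integral>\<^sup>+\<omega>. lord_weight alpha e j \<omega> \<partial>M)"
    using lord_weight_measurable_filt[OF assms(2)] assms(3)
    by (intro nn_integral_mult_le_if_nn_cond_exp_le_1) auto
  finally show ?thesis .
qed

lemma FDR_le_if_lord_weight_sum_le:
  fixes a :: real
  assumes "0 \<le> a"
    and predictable: "\<And>j. 1 \<le> j \<Longrightarrow> alpha j \<in> borel_measurable (filt M alpha e (j - 1))"
    and valid: "\<And>j. 1 \<le> j \<Longrightarrow> theta j = 0 \<Longrightarrow>
           AE \<omega> in M. nn_cond_exp M (filt M alpha e (j - 1)) (\<lambda>\<omega>. ennreal (e j \<omega>)) \<omega> \<le> 1"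
    and budget: "AE \<omega> in M. (\<Sum>j=1..t. lord_weight alpha e j \<omega>) \<le> a"
  shows "FDR M theta alpha e t \<le> a"
proof -
  let ?N = "{j\<in>{1..t}. theta j = 0}"
  let ?w = "lord_weight alpha e"
  have "(\<integral>\<^sup>+\<omega>. fdp theta alpha e t \<omega> \<partial>M) \<le> (\<integral>\<^sup>+\<omega>. (\<Sum>j\<in>?N. ennreal (?w j \<omega> * e j \<omega>)) \<partial>M)"
  proof (intro nn_integral_mono)
    fix \<omega> assume \<omega>: "\<omega> \<in> space M"
    then have "fdp theta alpha e t \<omega> \<le> (\<Sum>j\<in>?N. ?w j \<omega> * e j \<omega>)"
      by (intro fdp_le_sum_lord_weight_mult_evalue alpha_nonneg e_nonneg)
    with \<omega> show "ennreal (fdp theta alpha e t \<omega>) \<le> (\<Sum>j\<in>?N. ennreal (?w j \<omega> * e j \<omega>))"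
      by (simp add: sum_ennreal lord_weight_nonneg e_nonneg ennreal_leI)
  qed
  also have "\<dots> = (\<Sum>j\<in>?N. \<integral>\<^sup>+\<omega>. ?w j \<omega> * e j \<omega> \<partial>M)"
    by (intro nn_integral_sum) measurable
  also have "\<dots> \<le> (\<Sum>j\<in>?N. \<integral>\<^sup>+\<omega>. ?w j \<omega> \<partial>M)"
    using predictable valid by (intro sum_mono nn_integral_lord_weight_mult_evalue_le) auto
  also have "\<dots> \<le> (\<Sum>j=1..t. \<integral>\<^sup>+\<omega>. ?w j \<omega> \<partial>M)"
    by (intro sum_mono2) auto
  also have "\<dots> = (\<integral>\<^sup>+\<omega>. (\<Sum>j=1..t. ennreal (?w j \<omega>)) \<partial>M)"
    by (intro nn_integral_sum[symmetric]) measurable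
  also have "\<dots> \<le> (\<integral>\<^sup>+\<omega>. a \<partial>M)"
    using budget by (intro nn_integral_mono_AE)
      (auto elim!: eventually_mono simp: sum_ennreal lord_weight_nonneg intro: ennreal_leI)
  finally have "(\<integral>\<^sup>+\<omega>. fdp theta alpha e t \<omega> \<partial>M) \<le> a"
    by (simp add: emeasure_space_1)
  then show ?thesis
    unfolding FDR_eq_integral_fdp using \<open>0 \<le> a\<close>
    by (subst integral_eq_nn_integral) (auto simp: fdp_nonneg intro: enn2real_leI)
qed

end

theorem proposition1:
  fixes M :: "'a measure" and theta :: "nat \<Rightarrow> nat"
    and e alpha :: "nat \<Rightarrow> 'a \<Rightarrow> real" and \<alpha> :: real
  assumes "prob_space M"
    and "0 < \<alpha>" and "\<alpha> < 1"
    and "\<And>t. theta t \<in> {0, 1}"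
    and "\<And>t. e t \<in> borel_measurable M"
    and "\<And>t \<omega>. \<omega> \<in> space M \<Longrightarrow> e t \<omega> \<ge> 0"
    and "\<And>t. alpha t \<in> borel_measurable M"
    and "\<And>t \<omega>. \<omega> \<in> space M \<Longrightarrow> alpha t \<omega> \<ge> 0"
    and "\<And>t. 1 \<le> t \<Longrightarrow> alpha t \<in> borel_measurable (filt M alpha e (t - 1))"
    and "\<And>t. 1 \<le> t \<Longrightarrow> theta t = 0 \<Longrightarrow>
           AE \<omega> in M. nn_cond_exp M (filt M alpha e (t - 1)) (\<lambda>\<omega>. ennreal (e t \<omega>)) \<omega> \<le> 1"
    and "AE \<omega> in M. \<forall>t\<ge>1. (\<Sum>j=1..t. alpha j \<omega> / (Rej alpha e (j - 1) \<omega> + 1)) \<le> \<alpha>"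
  shows "\<forall>t\<ge>1. FDR M theta alpha e t \<le> \<alpha>"
proof (intro allI impI)
  fix t :: nat assume "1 \<le> t"
  interpret online_e_testing M e alpha
    using assms(1,5-8) by (simp add: online_e_testing_def online_e_testing_axioms_def)
  have "AE \<omega> in M. (\<Sum>j=1..t. lord_weight alpha e j \<omega>) \<le> \<alpha>"
    using assms(11) \<open>1 \<le> t\<close> by (auto elim!: eventually_mono simp: lord_weight_def)
  with assms(2,9,10) show "FDR M theta alpha e t \<le> \<alpha>"
    by (intro FDR_le_if_lord_weight_sum_le) auto
qed

end
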